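(* Let $\alpha,\beta:\mathbb{R}[x]\to\mathbb{R}$ be the linear functionals defined by $\alpha(1)=0$, $\alpha(x)=1$, $\alpha(x^n)=0$ for $n\ge2$, and $\beta(1)=1$, $\beta(x)=0$, $\beta(x^n)=0$ for $n\ge2$. Let $P(x)=x(x+1)(x-1)$, $R(x)=x^2-\tfrac14$, and $T[f]=\alpha(f)P+\beta(f)R$. Then $T$ is a hyperbolicity preserver.
   Context: A linear operator $T:\mathbb{R}[x]\to\mathbb{R}[x]$ is a hyperbolicity preserver if $T[p]$ has only real zeros whenever $p\in\mathbb{R}[x]$ has only real zeros. *)

theory Defs
  imports "HOL-Computational_Algebra.Polynomial" Complex_Main
begin

text \<open>A real polynomial has only real zeros (is hyperbolic). By the standard
convention in the theory of hyperbolicity preservers, the zero polynomial is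
counted as hyperbolic.\<close>
definition only_real_zeros :: "real poly \<Rightarrow> bool" where
  "only_real_zeros p \<longleftrightarrow>
     p = 0 \<or> (\<forall>z::complex. poly (map_poly complex_of_real p) z = 0 \<longrightarrow> z \<in> \<real>)"

definition linear_poly_op :: "(real poly \<Rightarrow> real poly) \<Rightarrow> bool" where
  "linear_poly_op T \<longleftrightarrow>
     (\<forall>p q. T (p + q) = T p + T q) \<and> (\<forall>c p. T (smult c p) = smult c (T p))"

definition hyperbolicity_preserver :: "(real poly \<Rightarrow> real poly) \<Rightarrow> bool" where
  "hyperbolicity_preserver T \<longleftrightarrow>
     linear_poly_op T \<and> (\<forall>p. only_real_zeros p \<longrightarrow> only_real_zeros (T p))"

definition alpha :: "real poly \<Rightarrow> real" where "alpha f = coeff f 1"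
definition beta :: "real poly \<Rightarrow> real" where "beta f = coeff f 0"

end

theory Submission
  imports Defs
begin

text \<open>Whatever f is, T f is a real multiple of either R, with zeros \<plusminus>1/2, or of
P + t R for some real t. The cubic P + t R takes the values 3/8 and -3/8 at -1/2 and 1/2,
and 3t/4 at \<plusminus>1; with its signs at \<plusminus>\<infinity> this gives three sign changes, hence three
real zeros, which exhaust the cubic. So T maps every polynomial, hyperbolic or not, to a
polynomial with only real zeros.\<close>

lemma poly_map_poly_of_real:
  "poly (map_poly of_real p) (of_real x) = (of_real (poly p x) :: 'a :: {real_algebra_1, comm_semiring_1})"
  by (induction p) (auto simp: map_poly_pCons)

lemma only_real_zeros_smult:
  assumes "only_real_zeros p"
  shows "only_real_zeros (smult c p)"
  using assms by (cases "c = 0") (auto simp: only_real_zeros_def map_poly_smult)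

lemma only_real_zeros_if_card_roots_eq_degree:
  assumes "p \<noteq> 0" and "finite A" and "card A = degree p" and "\<And>x. x \<in> A \<Longrightarrow> poly p x = 0"
  shows "only_real_zeros p"
  unfolding only_real_zeros_def
proof (intro disjI2 allI impI)
  fix z :: complex
  let ?Q = "map_poly complex_of_real p"
  assume z: "poly ?Q z = 0"
  have "?Q \<noteq> 0" using assms(1) by (simp add: map_poly_eq_0_iff)
  show "z \<in> \<real>"
  proof (rule ccontr)
    assume "z \<notin> \<real>"
    then have "z \<notin> of_real ` A" by auto
    then have "card (insert z (of_real ` A)) = degree p + 1"
      using assms(2,3) by (simp add: card_image inj_on_def)
    also have "\<dots> > card {x. poly ?Q x = 0}"
      using card_poly_roots_bound[OF \<open>?Q \<noteq> 0\<close>] by (simp add: degree_map_poly)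
    finally have "\<not> insert z (of_real ` A) \<subseteq> {x. poly ?Q x = 0}"
      using card_mono[OF poly_roots_finite[OF \<open>?Q \<noteq> 0\<close>]] by (meson leD)
    with z assms(4) show False by (auto simp: poly_map_poly_of_real)
  qed
qed

lemma cubic_has_three_real_roots:
  fixes t :: real
  defines "p \<equiv> [:0, 1:] * [:1, 1:] * [:-1, 1:] + smult t [:-1/4, 0, 1:]"
  obtains r1 r2 r3 where "r1 < r2" "r2 < r3" "poly p r1 = 0" "poly p r2 = 0" "poly p r3 = 0"
proof -
  have p: "poly p x = x^3 - x + t * (x^2 - 1/4)" for x
    by (simp add: p_def algebra_simps power2_eq_square power3_eq_cube)
  obtain r2 where r2: "-1/2 < r2" "r2 < 1/2" "poly p r2 = 0"
    using poly_IVT_neg[of "-1/2" "1/2" p] by (auto simp: p power2_eq_square power3_eq_cube)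
  consider "t > 0" | "t < 0" | "t = 0" by linarith
  then show ?thesis
  proof cases
    case 1
    have "poly p (-(t+1)) < 0"
      using 1 by (simp add: p power2_eq_square power3_eq_cube algebra_simps)
                 (smt (verit) mult_pos_pos)
    then obtain r1 where "r1 < -1" "poly p r1 = 0"
      using poly_IVT_pos[of "-(t+1)" "-1" p] 1 by (auto simp: p power2_eq_square power3_eq_cube)
    moreover obtain r3 where "1/2 < r3" "poly p r3 = 0"
      using poly_IVT_pos[of "1/2" 1 p] 1 by (auto simp: p power2_eq_square power3_eq_cube)
    ultimately show ?thesis using r2 that[of r1 r2 r3] by linarith
  next
    case 2
    have "poly p (1-t) > 0"
      using 2 by (simp add: p power2_eq_square power3_eq_cube algebra_simps)
    then obtain r3 where "1 < r3" "poly p r3 = 0"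
      using poly_IVT_pos[of 1 "1-t" p] 2 by (auto simp: p power2_eq_square power3_eq_cube)
    moreover obtain r1 where "r1 < -1/2" "poly p r1 = 0"
      using poly_IVT_pos[of "-1" "-1/2" p] 2 by (auto simp: p power2_eq_square power3_eq_cube)
    ultimately show ?thesis using r2 that[of r1 r2 r3] by linarith
  next
    case 3
    then show ?thesis using that[of "-1" 0 1] by (simp add: p)
  qed
qed

lemma only_real_zeros_cubic_pencil:
  "only_real_zeros ([:0, 1:] * [:1, 1:] * [:-1, 1:] + smult t [:-1/4, 0, 1:])"
  (is "only_real_zeros ?p")
proof -
  obtain r1 r2 r3 where r: "r1 < r2" "r2 < r3" "poly ?p r1 = 0" "poly ?p r2 = 0" "poly ?p r3 = 0"
    using cubic_has_three_real_roots .
  have "degree ?p = 3" by simp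
  then show ?thesis
    using r by (intro only_real_zeros_if_card_roots_eq_degree[of _ "{r1, r2, r3}"]) auto
qed

lemma only_real_zeros_quadratic:
  "only_real_zeros [:-1/4, 0, 1:]"
proof (rule only_real_zeros_if_card_roots_eq_degree[of _ "{-1/2, 1/2}"])
  show "poly [:-1/4, 0, 1:] x = 0" if "x \<in> {-1/2, 1/2}" for x :: real
    using that by (auto; algebra)
qed simp_all

lemma linear_poly_op_functional_combination:
  "linear_poly_op (\<lambda>f. smult (coeff f i) P + smult (coeff f j) R)"
  unfolding linear_poly_op_def by (simp add: smult_add_left smult_add_right)

theorem mainTheorem2:
  fixes P R :: "real poly" and T :: "real poly \<Rightarrow> real poly"
  assumes "P = [:0, 1:] * [:1, 1:] * [:-1, 1:]"
    and "R = [:-1/4, 0, 1:]"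
    and "\<And>f. T f = smult (alpha f) P + smult (beta f) R"
  shows "hyperbolicity_preserver T"
proof -
  have T: "T = (\<lambda>f. smult (coeff f 1) P + smult (coeff f 0) R)"
    using assms(3) by (simp add: fun_eq_iff alpha_def beta_def)
  have "only_real_zeros (smult a P + smult b R)" for a b
  proof (cases "a = 0")
    case True
    then have "smult a P + smult b R = smult b R" by simp
    then show ?thesis using only_real_zeros_smult[OF only_real_zeros_quadratic] assms(2) by metis
  next
    case False
    then have "smult a P + smult b R = smult a (P + smult (b / a) R)"
      by (simp add: smult_add_right)
    then show ?thesis
      using only_real_zeros_smult[OF only_real_zeros_cubic_pencil] assms(1,2) by metis
  qed
  then show ?thesis
    unfolding hyperbolicity_preserver_def T using linear_poly_op_functional_combination by blast
qed

end
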